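(* Let $(\mathcal{X},\rho)$ be a metric space, $\eta:\mathcal{X}\to\mathcal{Y}$ a function, and $U\subset\mathcal{X}$ a mutually-labeling set for $\eta$. Let $\mathbb{X}=(X_n)_{n\ge0}$ be an arbitrary process (or sequence) in $\mathcal{X}$ and $(\tilde X_n)_{n\ge1}$ any nearest neighbor process of it. Then \[\sum_{n=1}^\infty\mathbb{1}\{X_n\in U\text{ and }\eta(X_n)\ne\eta(\tilde X_n)\}\le1.\]
   Context: $\mathrm{margin}_\eta(x)=\inf\{\rho(x,x'):\eta(x')\ne\eta(x)\}$ (infimum of empty set $=+\infty$). A set $U$ is mutually-labeling for $\eta$ if $\mathrm{diam}(U)<\mathrm{margin}_\eta(x)$ for all $x\in U$, where $\mathrm{diam}(U)=\sup_{z,z'\in U}\rho(z,z')$. A nearest neighbor process is any $(\tilde X_n)_{n\ge1}$ with $\tilde X_n\in\arg\min_{x\in\{X_0,\dots,X_{n-1}\}}\rho(X_n,x)$. *)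

theory Defs
  imports "HOL-Analysis.Analysis" "HOL-Library.Extended_Nonnegative_Real"
begin

text \<open>margin, with the infimum of the empty set being +infinity (values in ereal).\<close>
definition margin :: "('a::metric_space \<Rightarrow> 'b) \<Rightarrow> 'a \<Rightarrow> ereal" where
  "margin \<eta> x = Inf {ereal (dist x x') | x'. \<eta> x' \<noteq> \<eta> x}"

definition diam :: "'a::metric_space set \<Rightarrow> ereal" where
  "diam U = Sup {ereal (dist z z') | z z'. z \<in> U \<and> z' \<in> U}"

definition mutually_labeling :: "('a::metric_space \<Rightarrow> 'b) \<Rightarrow> 'a set \<Rightarrow> bool" where
  "mutually_labeling \<eta> U \<longleftrightarrow> (\<forall>x\<in>U. diam U < margin \<eta> x)"

definition nn_process :: "(nat \<Rightarrow> 'a::metric_space) \<Rightarrow> (nat \<Rightarrow> 'a) \<Rightarrow> bool" where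
  "nn_process X Xt \<longleftrightarrow> (\<forall>n\<ge>1. Xt n \<in> {X i | i. i < n} \<and>
      (\<forall>i<n. dist (X n) (Xt n) \<le> dist (X n) (X i)))"

end

theory Submission
  imports Defs
begin

text \<open>Once the process has visited the mutually-labeling set U, every later visit to U
  has its nearest neighbour within distance diam U, hence strictly inside the margin, so it
  carries the same label. Thus only the first visit to U can be mislabeled.\<close>

lemma dist_le_diam:
  assumes "x \<in> U" and "y \<in> U"
  shows "ereal (dist x y) \<le> diam U"
  unfolding diam_def using assms by (intro Sup_upper) blast

lemma label_eq_if_dist_less_margin:
  assumes "ereal (dist x y) < margin \<eta> x"
  shows "\<eta> y = \<eta> x"
proof (rule ccontr)
  assume "\<eta> y \<noteq> \<eta> x"
  then have "margin \<eta> x \<le> ereal (dist x y)"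
    unfolding margin_def by (intro Inf_lower) auto
  with assms show False by simp
qed

lemma nn_process_label_eq_after_visit:
  assumes ml: "mutually_labeling \<eta> U"
    and nn: "nn_process X Xt"
    and "X m \<in> U" and "X n \<in> U" and "m < n"
  shows "\<eta> (X n) = \<eta> (Xt n)"
proof -
  have "dist (X n) (Xt n) \<le> dist (X n) (X m)"
    using nn \<open>m < n\<close> unfolding nn_process_def by auto
  then have "ereal (dist (X n) (Xt n)) \<le> ereal (dist (X n) (X m))"
    by simp
  also have "\<dots> \<le> diam U"
    using \<open>X m \<in> U\<close> \<open>X n \<in> U\<close> by (intro dist_le_diam)
  also have "diam U < margin \<eta> (X n)"
    using ml \<open>X n \<in> U\<close> unfolding mutually_labeling_def by blast
  finally show ?thesis
    by (rule label_eq_if_dist_less_margin[symmetric])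
qed

lemma suminf_indicator_le_one:
  assumes unique: "\<And>m n. P m \<Longrightarrow> P n \<Longrightarrow> m = n"
  shows "(\<Sum>n. if P n then 1 else 0 :: ennreal) \<le> 1"
proof -
  define N where "N = {n. P n}"
  have "N = {} \<or> (\<exists>k. N = {k})"
    using unique unfolding N_def by blast
  then have "finite N" and "card N \<le> 1"
    by auto
  have "(\<Sum>n. if P n then 1 else 0 :: ennreal) = (\<Sum>n\<in>N. if P n then 1 else 0)"
    by (rule suminf_finite[OF \<open>finite N\<close>]) (simp add: N_def)
  also have "\<dots> = of_nat (card N)"
    by (simp add: N_def)
  also have "\<dots> \<le> 1"
    using \<open>card N \<le> 1\<close> by simp
  finally show ?thesis .
qed

theorem lemma2:
  fixes \<eta> :: "'a::metric_space \<Rightarrow> 'b"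
    and U :: "'a set"
    and X Xt :: "nat \<Rightarrow> 'a"
  assumes "mutually_labeling \<eta> U"
    and "nn_process X Xt"
  shows "(\<Sum>n. (if X (Suc n) \<in> U \<and> \<eta> (X (Suc n)) \<noteq> \<eta> (Xt (Suc n)) then 1 else 0 :: ennreal)) \<le> 1"
proof (rule suminf_indicator_le_one)
  fix m n
  assume m: "X (Suc m) \<in> U \<and> \<eta> (X (Suc m)) \<noteq> \<eta> (Xt (Suc m))"
    and n: "X (Suc n) \<in> U \<and> \<eta> (X (Suc n)) \<noteq> \<eta> (Xt (Suc n))"
  show "m = n"
  proof (rule ccontr)
    assume "m \<noteq> n"
    then consider "Suc m < Suc n" | "Suc n < Suc m" by linarith
    then show False
      using nn_process_label_eq_after_visit[OF assms] m n by cases blast+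
  qed
qed

end
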